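(* Let $K\subseteq\mathbb{R}^{n}$ be compact, $T\subseteq\mathbb{R}^{n}$ compact with non-empty interior, $\delta>0$, and let $\Lambda(\delta)\subseteq K$ be a finite $\delta$-net for $K$. Then \[ N_{\omega}(K,T+\delta B_{2}^{n})\le N_{\omega}(K,T,\Lambda(\delta)). \]
   Context: $B_2^n$ is the closed Euclidean unit ball; a set $\Lambda$ is a $\delta$-net for $A$ if $A\subseteq\Lambda+\delta B_2^n$. $\mathbbm{1}_A$ is the indicator of $A$. $N_\omega(K,T)$ is the infimum of $\sum_i\omega_i$ over finite families $\{(x_i,\omega_i)\}$ with $x_i\in\mathbb{R}^n$, $\omega_i\ge0$, and $\sum_i\omega_i\mathbbm{1}_{T}(x-x_i)\ge1$ for all $x\in K$. For a finite set $\Lambda\subseteq\mathbb{R}^n$, $N_\omega(K,T,\Lambda)$ is the infimum of $\sum_{i}\omega_i$ over finite families $\{(x_i,\omega_i)\}$ with $x_i\in\Lambda$, $\omega_i\ge0$, such that $\sum_i\omega_i\mathbbm{1}_T(x-x_i)\ge\mathbbm{1}_K(x)$ for all $x\in\Lambda$. *)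

theory Defs
  imports "HOL-Analysis.Analysis" "HOL-Library.Extended_Real"
begin

text \<open>Finite weighted families are lists of pairs (point, weight).
  Infima are taken in the extended reals, so that an infimum over an empty
  set of admissible families is +\<infinity>.\<close>

definition N_omega :: "'a::euclidean_space set \<Rightarrow> 'a set \<Rightarrow> ereal" where
  "N_omega K T = Inf {ereal (\<Sum>(x,w)\<leftarrow>F. w) | F.
      (\<forall>(x,w)\<in>set F. w \<ge> 0) \<and>
      (\<forall>z\<in>K. (\<Sum>(x,w)\<leftarrow>F. w * indicator T (z - x)) \<ge> (1::real))}"

definition N_omega_net :: "'a::euclidean_space set \<Rightarrow> 'a set \<Rightarrow> 'a set \<Rightarrow> ereal" where
  "N_omega_net K T \<Lambda> = Inf {ereal (\<Sum>(x,w)\<leftarrow>F. w) | F.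
      (\<forall>(x,w)\<in>set F. x \<in> \<Lambda> \<and> w \<ge> 0) \<and>
      (\<forall>z\<in>\<Lambda>. (\<Sum>(x,w)\<leftarrow>F. w * indicator T (z - x)) \<ge> (indicator K z :: real))}"

end

theory Submission
  imports Defs
begin

text \<open>A weighted family on the net \<open>\<Lambda>\<close> covering \<open>\<Lambda> \<inter> K\<close> by translates of \<open>T\<close> also
  covers all of \<open>K\<close> by translates of \<open>T + \<delta>B\<close>: each \<open>z \<in> K\<close> is \<open>l + d\<close> with \<open>l \<in> \<Lambda>\<close> and
  \<open>|d| \<le> \<delta>\<close>, and \<open>l - x \<in> T\<close> gives \<open>z - x \<in> T + \<delta>B\<close>. So the infimum defining the
  right-hand side ranges over a subset of the families admissible on the left.\<close>

lemma indicator_le_indicator_thickening: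
  fixes T :: "'a::real_normed_vector set"
  assumes "d \<in> cball 0 \<delta>"
  shows "indicator T y \<le> (indicator {t + d | t d. t \<in> T \<and> d \<in> cball 0 \<delta>} (y + d) :: real)"
  using assms by (auto simp: indicator_def)

lemma weighted_indicator_sum_mono:
  fixes F :: "('a::ab_group_add \<times> real) list"
  assumes "\<forall>(x,w)\<in>set F. w \<ge> 0"
    and "\<And>x. indicator A (a - x) \<le> (indicator B (b - x) :: real)"
  shows "(\<Sum>(x,w)\<leftarrow>F. w * indicator A (a - x)) \<le> (\<Sum>(x,w)\<leftarrow>F. w * indicator B (b - x))"
proof (rule sum_list_mono)
  fix p assume "p \<in> set F"
  with assms show "(case p of (x, w) \<Rightarrow> w * indicator A (a - x))
      \<le> (case p of (x, w) \<Rightarrow> w * indicator B (b - x))"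
    by (cases p) (auto intro: mult_left_mono)
qed

lemma net_cover_is_thickened_cover:
  fixes K T \<Lambda> :: "'a::real_normed_vector set"
  assumes "\<Lambda> \<subseteq> K" and "K \<subseteq> {l + d | l d. l \<in> \<Lambda> \<and> d \<in> cball 0 \<delta>}"
    and weights: "\<forall>(x,w)\<in>set F. x \<in> \<Lambda> \<and> w \<ge> 0"
    and cover: "\<forall>z\<in>\<Lambda>. (\<Sum>(x,w)\<leftarrow>F. w * indicator T (z - x)) \<ge> (indicator K z :: real)"
    and "z \<in> K"
  shows "(\<Sum>(x,w)\<leftarrow>F. w * indicator {t + d | t d. t \<in> T \<and> d \<in> cball 0 \<delta>} (z - x)) \<ge> (1::real)"
proof -
  obtain l d where l: "l \<in> \<Lambda>" and d: "d \<in> cball 0 \<delta>" and z: "z = l + d"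
    using assms(2) \<open>z \<in> K\<close> by blast
  have "1 = (indicator K l :: real)"
    using l assms(1) by auto
  also have "\<dots> \<le> (\<Sum>(x,w)\<leftarrow>F. w * indicator T (l - x))"
    using cover l by blast
  also have "\<dots> \<le> (\<Sum>(x,w)\<leftarrow>F. w * indicator {t + d | t d. t \<in> T \<and> d \<in> cball 0 \<delta>} (z - x))"
  proof (rule weighted_indicator_sum_mono)
    show "\<forall>(x,w)\<in>set F. w \<ge> 0"
      using weights by auto
    fix x
    have "z - x = (l - x) + d"
      using z by (simp add: algebra_simps)
    show "indicator T (l - x)
        \<le> (indicator {t + d | t d. t \<in> T \<and> d \<in> cball 0 \<delta>} (z - x) :: real)"
      using indicator_le_indicator_thickening[OF d, of T "l - x"] \<open>z - x = (l - x) + d\<close>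
      by (metis (no_types, lifting))
  qed
  finally show ?thesis .
qed

theorem lemma2p2:
  fixes K T \<Lambda> :: "'a::euclidean_space set" and \<delta> :: real
  assumes "compact K" and "compact T" and "interior T \<noteq> {}" and "\<delta> > 0"
    and "finite \<Lambda>" and "\<Lambda> \<subseteq> K"
    and "K \<subseteq> {l + d | l d. l \<in> \<Lambda> \<and> d \<in> cball 0 \<delta>}"
  shows "N_omega K {t + d | t d. t \<in> T \<and> d \<in> cball 0 \<delta>} \<le> N_omega_net K T \<Lambda>"
  unfolding N_omega_def N_omega_net_def
proof (rule Inf_superset_mono, safe)
  fix F
  assume weights: "\<forall>(x,w)\<in>set F. x \<in> \<Lambda> \<and> w \<ge> 0"
    and cover: "\<forall>z\<in>\<Lambda>. (\<Sum>(x,w)\<leftarrow>F. w * indicator T (z - x)) \<ge> (indicator K z :: real)"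
  have "\<forall>(x,w)\<in>set F. w \<ge> 0"
    using weights by auto
  moreover have "\<forall>z\<in>K. (\<Sum>(x,w)\<leftarrow>F. w * indicator {t + d | t d. t \<in> T \<and> d \<in> cball 0 \<delta>} (z - x)) \<ge> (1::real)"
    using net_cover_is_thickened_cover[OF assms(6,7) weights cover] by blast
  ultimately show "\<exists>G. ereal (\<Sum>(x,w)\<leftarrow>F. w) = ereal (\<Sum>(x,w)\<leftarrow>G. w) \<and>
      (\<forall>(x,w)\<in>set G. w \<ge> 0) \<and>
      (\<forall>z\<in>K. (\<Sum>(x,w)\<leftarrow>G. w * indicator {t + d | t d. t \<in> T \<and> d \<in> cball 0 \<delta>} (z - x)) \<ge> 1)"
    by blast
qed

end
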